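(* Let $k\ge2$ and let $C_{3k}$ be the cycle on $3k$ vertices. Then $i\gamma(C_{3k})=k$, so $|V(C_{3k})|-i\gamma(C_{3k})=2k$. Moreover, if $M\subseteq V(C_{3k})$ is a set of $2k$ vertices inducing a matching of size $k$ in $C_{3k}$, then $M$ is a cover of $C_{3k}$, and for $W_1=\dots=W_{2k-1}=M$ there is no cover $W=\{w_{i_1},\dots,w_{i_t}\}$ of $C_{3k}$ with $1\le i_1<\dots<i_t\le 2k-1$ and $w_{i_j}\in W_{i_j}$ for all $j$.
   Context: A cover of a graph is a vertex set containing at least one endpoint of every edge. $\gamma(G;A)$ is the minimum size of a set $D$ such that every vertex of $A$ has a neighbor in $D$; $i\gamma(G)=\max\{\gamma(G;I): I\text{ an independent set of }G\}$. *)

theory Defs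
  imports Main
begin

text \<open>Finite simple graphs are given by a vertex set V and a symmetric,
irreflexive adjacency relation E.\<close>

definition is_cover :: "'a set \<Rightarrow> ('a \<Rightarrow> 'a \<Rightarrow> bool) \<Rightarrow> 'a set \<Rightarrow> bool" where
  "is_cover V E C \<longleftrightarrow> C \<subseteq> V \<and> (\<forall>u\<in>V. \<forall>v\<in>V. E u v \<longrightarrow> u \<in> C \<or> v \<in> C)"

definition independent :: "'a set \<Rightarrow> ('a \<Rightarrow> 'a \<Rightarrow> bool) \<Rightarrow> 'a set \<Rightarrow> bool" where
  "independent V E I \<longleftrightarrow> I \<subseteq> V \<and> (\<forall>u\<in>I. \<forall>v\<in>I. \<not> E u v)"

definition gamma_dom :: "'a set \<Rightarrow> ('a \<Rightarrow> 'a \<Rightarrow> bool) \<Rightarrow> 'a set \<Rightarrow> nat" where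
  "gamma_dom V E A = (LEAST m. \<exists>D. D \<subseteq> V \<and> card D = m \<and> (\<forall>a\<in>A. \<exists>d\<in>D. E a d))"

definition igamma :: "'a set \<Rightarrow> ('a \<Rightarrow> 'a \<Rightarrow> bool) \<Rightarrow> nat" where
  "igamma V E = Max {gamma_dom V E I | I. independent V E I}"

definition cycle_V :: "nat \<Rightarrow> nat set" where
  "cycle_V n = {0..<n}"

definition cycle_E :: "nat \<Rightarrow> nat \<Rightarrow> nat \<Rightarrow> bool" where
  "cycle_E n i j \<longleftrightarrow> i < n \<and> j < n \<and> (j = (i + 1) mod n \<or> i = (j + 1) mod n)"

definition induced_edges :: "('a \<Rightarrow> 'a \<Rightarrow> bool) \<Rightarrow> 'a set \<Rightarrow> 'a set set" where
  "induced_edges E M = {{u, v} | u v. u \<in> M \<and> v \<in> M \<and> E u v}"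

definition induces_matching :: "'a set \<Rightarrow> ('a \<Rightarrow> 'a \<Rightarrow> bool) \<Rightarrow> 'a set \<Rightarrow> nat \<Rightarrow> bool" where
  "induces_matching V E M k \<longleftrightarrow> M \<subseteq> V \<and>
     (\<forall>e\<in>induced_edges E M. \<forall>e'\<in>induced_edges E M. e \<noteq> e' \<longrightarrow> e \<inter> e' = {}) \<and>
     card (induced_edges E M) = k"

end

theory Submission
  imports Defs
begin

text \<open>Cutting C_{3k} into the k blocks {3j, 3j+1, 3j+2}, any independent set I is dominated
by one vertex per block (3j+1, or 3j when 3j+1 \<in> I), so i\<gamma> \<le> k; the multiples of 3 form
an independent set whose members have pairwise disjoint neighbourhoods, so i\<gamma> \<ge> k.
If M induces a perfect matching of k edges {v, v+1}, the map v \<mapsto> v+2 is a bijection onto the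
k vertices outside M, so every edge meets M; and every vertex of M has a neighbour outside M.
Hence a cover picked from M must be all of M, which needs 2k choices, not 2k-1.\<close>

lemma gamma_dom_le:
  assumes "D \<subseteq> V" and "\<forall>a\<in>A. \<exists>d\<in>D. E a d"
  shows "gamma_dom V E A \<le> card D"
  unfolding gamma_dom_def using assms by (intro Least_le) blast

lemma card_le_gamma_dom:
  assumes "finite V" and "\<forall>a\<in>A. \<exists>d\<in>V. E a d"
    and disjoint_nbhds: "\<forall>a\<in>A. \<forall>b\<in>A. \<forall>d. E a d \<longrightarrow> E b d \<longrightarrow> a = b"
  shows "card A \<le> gamma_dom V E A"
proof -
  let ?P = "\<lambda>m. \<exists>D. D \<subseteq> V \<and> card D = m \<and> (\<forall>a\<in>A. \<exists>d\<in>D. E a d)"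
  have "?P (card V)" using assms(2) by blast
  then have "?P (LEAST m. ?P m)" by (rule LeastI)
  then obtain D where D: "D \<subseteq> V" "card D = gamma_dom V E A" "\<forall>a\<in>A. \<exists>d\<in>D. E a d"
    unfolding gamma_dom_def by blast
  then obtain g where g: "\<forall>a\<in>A. g a \<in> D \<and> E a (g a)" by metis
  have "inj_on g A" using g disjoint_nbhds by (metis inj_onI)
  moreover have "finite D" using D(1) assms(1) by (rule finite_subset)
  ultimately have "card A \<le> card D" using g by (intro card_inj_on_le) auto
  with D(2) show ?thesis by simp
qed

lemma igamma_eqI:
  assumes "\<And>I. independent V E I \<Longrightarrow> gamma_dom V E I \<le> m"
    and "independent V E I\<^sub>0" and "m \<le> gamma_dom V E I\<^sub>0"
  shows "igamma V E = m"
proof -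
  let ?S = "{gamma_dom V E I | I. independent V E I}"
  have "?S \<subseteq> {..m}" using assms(1) by auto
  moreover have "m \<in> ?S" using assms by (metis (mono_tags, lifting) le_antisym mem_Collect_eq)
  ultimately show ?thesis unfolding igamma_def by (intro Max_eqI) (auto intro: finite_subset)
qed

lemma cover_subset_eq:
  assumes "is_cover V E C" and "C \<subseteq> M"
    and "\<forall>m\<in>M. \<exists>w\<in>V - M. E m w" and "M \<subseteq> V"
  shows "C = M"
proof -
  have "m \<in> C" if "m \<in> M" for m
  proof -
    obtain w where "w \<in> V - M" "E m w" using assms(3) \<open>m \<in> M\<close> by blast
    then show ?thesis using assms(1,2,4) \<open>m \<in> M\<close> unfolding is_cover_def by blast
  qed
  with assms(2) show ?thesis by blast
qed

lemma no_cover_from_fewer_choices: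
  assumes "finite M" and "M \<subseteq> V" and "\<forall>m\<in>M. \<exists>w\<in>V - M. E m w" and "n < card M"
  shows "\<forall>W. (\<forall>i\<in>{1..n}. W i = M) \<longrightarrow>
           \<not> (\<exists>S f. S \<subseteq> {1..n} \<and> (\<forall>i\<in>S. f i \<in> W i) \<and> is_cover V E (f ` S))"
proof (intro allI impI notI)
  fix W :: "nat \<Rightarrow> 'a set"
  assume "\<forall>i\<in>{1..n}. W i = M"
    and "\<exists>S f. S \<subseteq> {1..n} \<and> (\<forall>i\<in>S. f i \<in> W i) \<and> is_cover V E (f ` S)"
  then obtain S f where S: "S \<subseteq> {1..n}" "f ` S \<subseteq> M" and "is_cover V E (f ` S)" by blast
  then have "f ` S = M" using assms(2,3) by (intro cover_subset_eq)
  have "finite S" using S(1) by (rule finite_subset) simp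
  then have "card M \<le> card S" using \<open>f ` S = M\<close> card_image_le by blast
  also have "\<dots> \<le> n" using card_mono[OF _ S(1)] by simp
  finally show False using assms(4) by simp
qed

lemma induced_matching_unique_partner:
  assumes "induces_matching V E M k" and irrefl: "\<And>u. \<not> E u u"
    and "m \<in> M" "x \<in> M" "y \<in> M" "E m x" "E m y"
  shows "x = y"
proof (rule ccontr)
  assume "x \<noteq> y"
  have "m \<noteq> x" using irrefl \<open>E m x\<close> by metis
  have disjoint: "\<forall>e\<in>induced_edges E M. \<forall>e'\<in>induced_edges E M. e \<noteq> e' \<longrightarrow> e \<inter> e' = {}"
    using assms(1) unfolding induces_matching_def by simp
  have "{m, x} \<in> induced_edges E M" unfolding induced_edges_def using assms(3,4,6) by blast
  moreover have "{m, y} \<in> induced_edges E M" unfolding induced_edges_def using assms(3,5,7) by blast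
  moreover have "{m, x} \<noteq> {m, y}" using \<open>x \<noteq> y\<close> \<open>m \<noteq> x\<close> by (simp add: doubleton_eq_iff)
  ultimately have "{m, x} \<inter> {m, y} = {}" by (rule disjoint[rule_format])
  then show False by simp
qed

definition cycle_succ :: "nat \<Rightarrow> nat \<Rightarrow> nat" where
  "cycle_succ n a = (if a + 1 = n then 0 else a + 1)"

lemma cycle_E_iff:
  "cycle_E n a b \<longleftrightarrow> a < n \<and> b < n \<and> (b = cycle_succ n a \<or> a = cycle_succ n b)"
proof (cases "a < n \<and> b < n")
  case True
  then have "(a + 1) mod n = cycle_succ n a" "(b + 1) mod n = cycle_succ n b"
    unfolding cycle_succ_def by auto
  with True show ?thesis unfolding cycle_E_def by simp
qed (auto simp: cycle_E_def)

lemma cycle_succ_lt: "a < n \<Longrightarrow> cycle_succ n a < n"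
  unfolding cycle_succ_def by auto

lemma cycle_succ_inj: "a < n \<Longrightarrow> b < n \<Longrightarrow> cycle_succ n a = cycle_succ n b \<Longrightarrow> a = b"
  unfolding cycle_succ_def by (auto split: if_splits)

lemma cycle_succ_surj:
  assumes "a < n" shows "\<exists>p<n. cycle_succ n p = a"
proof (cases a)
  case 0
  with assms have "n - 1 < n \<and> cycle_succ n (n - 1) = a" unfolding cycle_succ_def by auto
  then show ?thesis by blast
next
  case (Suc p)
  with assms have "p < n \<and> cycle_succ n p = a" unfolding cycle_succ_def by auto
  then show ?thesis by blast
qed

lemma cycle_succ_succ_neq: "3 \<le> n \<Longrightarrow> a < n \<Longrightarrow> cycle_succ n (cycle_succ n a) \<noteq> a"
  unfolding cycle_succ_def by auto

lemma cycle_E_irrefl: "2 \<le> n \<Longrightarrow> \<not> cycle_E n a a"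
  unfolding cycle_E_iff cycle_succ_def by auto

lemma gamma_dom_independent_cycle_le:
  assumes I: "independent (cycle_V (3*k)) (cycle_E (3*k)) I"
  shows "gamma_dom (cycle_V (3*k)) (cycle_E (3*k)) I \<le> k"
proof -
  define D where "D = (\<lambda>j. if 3*j + 1 \<in> I then 3*j else 3*j + 1) ` {..<k}"
  have "\<exists>d\<in>D. cycle_E (3*k) a d" if "a \<in> I" for a
  proof -
    define j where "j = a div 3"
    have "a < 3*k" using \<open>a \<in> I\<close> I unfolding independent_def cycle_V_def by auto
    then have j: "j < k" "a = 3*j + a mod 3" unfolding j_def by auto
    show ?thesis
    proof (cases "a mod 3 = 1")
      case True
      then have "3*j \<in> D" unfolding D_def using j \<open>a \<in> I\<close> by (auto intro!: image_eqI[of _ _ j])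
      moreover have "cycle_E (3*k) a (3*j)" unfolding cycle_E_iff cycle_succ_def using j True by auto
      ultimately show ?thesis by blast
    next
      case False
      then have "a mod 3 = 0 \<or> a mod 3 = 2" by auto
      then have adj: "cycle_E (3*k) a (3*j + 1)"
        unfolding cycle_E_iff cycle_succ_def using j by (auto; presburger)
      then have "3*j + 1 \<notin> I" using \<open>a \<in> I\<close> I unfolding independent_def by blast
      then have "3*j + 1 \<in> D" unfolding D_def using j by (auto intro!: image_eqI[of _ _ j])
      with adj show ?thesis by blast
    qed
  qed
  moreover have "D \<subseteq> cycle_V (3*k)" unfolding D_def cycle_V_def by auto
  ultimately have "gamma_dom (cycle_V (3*k)) (cycle_E (3*k)) I \<le> card D"
    by (intro gamma_dom_le) auto
  also have "\<dots> \<le> card {..<k}" unfolding D_def by (rule card_image_le) simp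
  finally show ?thesis by simp
qed

lemma independent_cycle_multiples_of_3:
  "independent (cycle_V (3*k)) (cycle_E (3*k)) ((\<lambda>i. 3*i) ` {..<k})"
proof -
  have "\<not> cycle_E (3*k) (3*i) (3*j)" if "i < k" "j < k" for i j
    using that unfolding cycle_E_iff cycle_succ_def by (auto; presburger)
  then show ?thesis unfolding independent_def cycle_V_def by auto
qed

lemma gamma_dom_cycle_multiples_of_3:
  "k \<le> gamma_dom (cycle_V (3*k)) (cycle_E (3*k)) ((\<lambda>i. 3*i) ` {..<k})"
proof -
  let ?I = "(\<lambda>i. 3*i) ` {..<k}"
  have "card ?I = k" by (simp add: card_image inj_on_def)
  moreover have "cycle_E (3*k) (3*i) (3*i + 1)" if "i < k" for i
    using that unfolding cycle_E_iff cycle_succ_def by (auto; presburger)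
  then have "\<forall>a\<in>?I. \<exists>d\<in>cycle_V (3*k). cycle_E (3*k) a d"
    unfolding cycle_V_def by (fastforce simp: cycle_E_iff)
  moreover have "i = j" if "i < k" "j < k" "cycle_E (3*k) (3*i) d" "cycle_E (3*k) (3*j) d" for i j d
    using that unfolding cycle_E_iff cycle_succ_def by (auto split: if_splits; presburger)
  then have "\<forall>a\<in>?I. \<forall>b\<in>?I. \<forall>d. cycle_E (3*k) a d \<longrightarrow> cycle_E (3*k) b d \<longrightarrow> a = b"
    by auto
  ultimately show ?thesis
    using card_le_gamma_dom[of "cycle_V (3*k)" ?I "cycle_E (3*k)"] by (simp add: cycle_V_def)
qed

lemma induced_edges_cycle:
  assumes "M \<subseteq> cycle_V n"
  shows "induced_edges (cycle_E n) M = (\<lambda>v. {v, cycle_succ n v}) ` {v \<in> M. cycle_succ n v \<in> M}"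
    (is "_ = ?edges")
proof
  show "induced_edges (cycle_E n) M \<subseteq> ?edges"
  proof
    fix e assume "e \<in> induced_edges (cycle_E n) M"
    then obtain u v where e: "e = {u, v}" "u \<in> M" "v \<in> M" "v = cycle_succ n u \<or> u = cycle_succ n v"
      unfolding induced_edges_def cycle_E_iff by blast
    then consider "v = cycle_succ n u" | "u = cycle_succ n v" by blast
    then show "e \<in> ?edges"
    proof cases
      case 1
      with e show ?thesis by (intro image_eqI[of _ _ u]) auto
    next
      case 2
      with e show ?thesis by (intro image_eqI[of _ _ v]) (auto simp: insert_commute)
    qed
  qed
  show "?edges \<subseteq> induced_edges (cycle_E n) M"
  proof
    fix e assume "e \<in> ?edges"
    then obtain v where v: "e = {v, cycle_succ n v}" "v \<in> M" "cycle_succ n v \<in> M" by blast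
    then have "cycle_E n v (cycle_succ n v)"
      using assms unfolding cycle_V_def by (auto simp: cycle_E_iff cycle_succ_lt)
    with v show "e \<in> induced_edges (cycle_E n) M" unfolding induced_edges_def by blast
  qed
qed

lemma card_induced_edges_cycle:
  assumes "3 \<le> n" and "M \<subseteq> cycle_V n"
  shows "card (induced_edges (cycle_E n) M) = card {v \<in> M. cycle_succ n v \<in> M}"
proof -
  have inj: "inj_on (\<lambda>v. {v, cycle_succ n v}) M"
  proof
    fix a b assume "a \<in> M" "b \<in> M" and ab: "{a, cycle_succ n a} = {b, cycle_succ n b}"
    then have "a < n" using assms(2) unfolding cycle_V_def by auto
    show "a = b"
    proof (rule ccontr)
      assume "a \<noteq> b"
      with ab have "a = cycle_succ n b \<and> cycle_succ n a = b" unfolding doubleton_eq_iff by blast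
      then have "cycle_succ n (cycle_succ n a) = a" by metis
      with cycle_succ_succ_neq[OF assms(1) \<open>a < n\<close>] show False by contradiction
    qed
  qed
  show ?thesis
    unfolding induced_edges_cycle[OF assms(2)] by (rule card_image[OF inj_on_subset[OF inj]]) auto
qed

lemma induced_matching_cycle_outside_neighbour:
  assumes "3 \<le> n" and M: "induces_matching (cycle_V n) (cycle_E n) M k" and "m \<in> M"
  shows "\<exists>w\<in>cycle_V n - M. cycle_E n m w"
proof -
  have irrefl: "\<And>u. \<not> cycle_E n u u" using assms(1) by (simp add: cycle_E_irrefl)
  have "m < n" using M \<open>m \<in> M\<close> unfolding induces_matching_def cycle_V_def by auto
  obtain p where p: "p < n" "cycle_succ n p = m" using cycle_succ_surj[OF \<open>m < n\<close>] by blast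
  have nbrs: "cycle_E n m (cycle_succ n m)" "cycle_E n m p"
    using \<open>m < n\<close> p by (auto simp: cycle_E_iff cycle_succ_lt)
  have "cycle_succ n m \<noteq> p" using cycle_succ_succ_neq[OF assms(1) p(1)] p(2) by metis
  then have "cycle_succ n m \<notin> M \<or> p \<notin> M"
    using induced_matching_unique_partner[OF M irrefl \<open>m \<in> M\<close> _ _ nbrs] by blast
  with nbrs show ?thesis unfolding cycle_V_def by (auto simp: cycle_E_iff)
qed

lemma induced_matching_cycle_is_cover:
  assumes "3 \<le> n" and M: "induces_matching (cycle_V n) (cycle_E n) M k"
    and few_outside: "card (cycle_V n - M) \<le> k"
  shows "is_cover (cycle_V n) (cycle_E n) M"
proof -
  let ?s = "cycle_succ n"
  define A where "A = {v \<in> M. ?s v \<in> M}"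
  have irrefl: "\<And>u. \<not> cycle_E n u u" using assms(1) by (simp add: cycle_E_irrefl)
  have MV: "M \<subseteq> cycle_V n" using M unfolding induces_matching_def by simp
  have "card A = k"
    using M card_induced_edges_cycle[OF assms(1) MV] unfolding A_def induces_matching_def by simp
  have A_lt: "v < n" "?s v < n" if "v \<in> A" for v
    using that MV unfolding A_def cycle_V_def by auto
  have "?s (?s v) \<in> cycle_V n - M" if "v \<in> A" for v
  proof -
    have "v \<in> M" "?s v \<in> M" using that unfolding A_def by auto
    moreover have "cycle_E n (?s v) v" "cycle_E n (?s v) (?s (?s v))"
      using A_lt[OF that] by (auto simp: cycle_E_iff cycle_succ_lt)
    ultimately have "?s (?s v) \<notin> M"
      using induced_matching_unique_partner[OF M irrefl] cycle_succ_succ_neq[OF assms(1) A_lt(1)[OF that]]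
      by blast
    then show ?thesis using A_lt[OF that] cycle_succ_lt unfolding cycle_V_def by auto
  qed
  then have into: "(\<lambda>v. ?s (?s v)) ` A \<subseteq> cycle_V n - M" by blast
  have "inj_on (\<lambda>v. ?s (?s v)) A"
  proof (rule inj_onI)
    fix a b assume "a \<in> A" "b \<in> A" "?s (?s a) = ?s (?s b)"
    then have "?s a = ?s b" using A_lt cycle_succ_inj by blast
    then show "a = b" using A_lt \<open>a \<in> A\<close> \<open>b \<in> A\<close> cycle_succ_inj by blast
  qed
  then have "card ((\<lambda>v. ?s (?s v)) ` A) = k" using \<open>card A = k\<close> by (simp add: card_image)
  moreover have fin: "finite (cycle_V n - M)" unfolding cycle_V_def by simp
  ultimately have onto: "(\<lambda>v. ?s (?s v)) ` A = cycle_V n - M"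
    using card_mono[OF fin into] few_outside by (intro card_subset_eq[OF fin into]) linarith
  have pred_in_M: "a \<in> M" if "a < n" "?s a \<notin> M" for a
  proof -
    have "?s a \<in> cycle_V n - M" using that cycle_succ_lt unfolding cycle_V_def by auto
    then obtain v where "v \<in> A" "?s a = ?s (?s v)" using onto by blast
    then have "a = ?s v" using cycle_succ_inj[OF that(1) A_lt(2)] by blast
    with \<open>v \<in> A\<close> show ?thesis unfolding A_def by simp
  qed
  show ?thesis unfolding is_cover_def
  proof (intro conjI ballI impI)
    fix u v assume "cycle_E n u v"
    then have "u < n" "v < n" "v = ?s u \<or> u = ?s v" by (auto simp: cycle_E_iff)
    then show "u \<in> M \<or> v \<in> M" using pred_in_M by blast
  qed (rule MV)
qed

lemma igamma_cycle: "igamma (cycle_V (3*k)) (cycle_E (3*k)) = k"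
  by (rule igamma_eqI[OF gamma_dom_independent_cycle_le independent_cycle_multiples_of_3
                         gamma_dom_cycle_multiples_of_3])

theorem mainTheorem8:
  fixes k :: nat
  assumes "k \<ge> 2"
  shows "igamma (cycle_V (3*k)) (cycle_E (3*k)) = k
    \<and> card (cycle_V (3*k)) - igamma (cycle_V (3*k)) (cycle_E (3*k)) = 2*k
    \<and> (\<forall>M. M \<subseteq> cycle_V (3*k) \<and> card M = 2*k \<and> induces_matching (cycle_V (3*k)) (cycle_E (3*k)) M k \<longrightarrow>
          is_cover (cycle_V (3*k)) (cycle_E (3*k)) M
          \<and> (\<forall>W :: nat \<Rightarrow> nat set. (\<forall>i\<in>{1..2*k-1}. W i = M) \<longrightarrow>
               \<not> (\<exists>S f. S \<subseteq> {1..2*k-1} \<and> (\<forall>i\<in>S. f i \<in> W i)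
                        \<and> is_cover (cycle_V (3*k)) (cycle_E (3*k)) (f ` S))))"
proof -
  let ?V = "cycle_V (3*k)" and ?E = "cycle_E (3*k)"
  have three_le: "3 \<le> 3*k" using assms by simp
  have "is_cover ?V ?E M
          \<and> (\<forall>W. (\<forall>i\<in>{1..2*k-1}. W i = M) \<longrightarrow>
               \<not> (\<exists>S f. S \<subseteq> {1..2*k-1} \<and> (\<forall>i\<in>S. f i \<in> W i) \<and> is_cover ?V ?E (f ` S)))"
    if MV: "M \<subseteq> ?V" and "card M = 2*k" and matching: "induces_matching ?V ?E M k" for M
  proof
    have "finite M" using MV finite_subset unfolding cycle_V_def by blast
    with MV \<open>card M = 2*k\<close> have "card (?V - M) = k" by (simp add: card_Diff_subset cycle_V_def)
    then show "is_cover ?V ?E M" by (intro induced_matching_cycle_is_cover[OF three_le matching]) simp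
    show "\<forall>W. (\<forall>i\<in>{1..2*k-1}. W i = M) \<longrightarrow>
            \<not> (\<exists>S f. S \<subseteq> {1..2*k-1} \<and> (\<forall>i\<in>S. f i \<in> W i) \<and> is_cover ?V ?E (f ` S))"
      using \<open>finite M\<close> MV induced_matching_cycle_outside_neighbour[OF three_le matching] \<open>card M = 2*k\<close> assms
      by (intro no_cover_from_fewer_choices) auto
  qed
  moreover have "card ?V - k = 2*k" by (simp add: cycle_V_def)
  ultimately show ?thesis unfolding igamma_cycle by blast
qed

end
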